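(* For every $n\in\mathbb N$, Thompson's group $T$ acts transitively, via $t\cdot x=\iota(t)(x)$, on the set $\Lambda_n$ of $n$-tuples $(x_1,\ldots,x_n)$ of pairwise distinct elements of $Z$ which are cyclically ordered with respect to $\le_{\rm lex}$ (i.e. some cyclic rotation $(x_k,\ldots,x_n,x_1,\ldots,x_{k-1})$ is strictly $\le_{\rm lex}$-increasing).
   Context: Let $\{0,1\}^*$ be the finite words over $\{0,1\}$ (empty word $\varepsilon$) and $Z=\{0,1\}^*\cup\{\zeta\}$ for an extra symbol $\zeta$. Order $Z$ by $\le_{\rm lex}$: for words $x,y$ append the infinite string $\tfrac12\tfrac12\cdots$ and compare lexicographically with $0<\tfrac12<1$; $\zeta$ is larger than all words. A finite rooted binary subtree is a finite prefix-closed set of words containing $\varepsilon$ in which each element has both or neither of its children $x0,x1$; leaves are elements with no children, nodes the others; for such $R$ let $b_R:\mathrm{nodes}(R)\cup\{\zeta\}\to\mathrm{leaves}(R)$ be the unique $\le_{\rm lex}$-preserving bijection. Thompson's group $T$ is the group of homeomorphisms $v$ of $\{0,1\}^{\mathbb N}$ for which there are finite rooted binary subtrees $L,R$ with leaves $\ell_1<_{\rm lex}\cdots<_{\rm lex}\ell_k$, $r_1<_{\rm lex}\cdots<_{\rm lex}r_k$, and a cyclic shift $f(\ell_i)=r_{i+c \bmod k}$, such that $v(\ell\omega)=f(\ell)\omega$. Define the bijection $\iota(v)$ of $Z$ by $\iota(v)(x)=b_R^{-1}(f(b_L(x)))$ for $x\in\mathrm{nodes}(L)\cup\{\zeta\}$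 and $\iota(v)(\ell s)=f(\ell)s$ for $\ell\in\mathrm{leaves}(L)$, $s\in\{0,1\}^*$; this is independent of the choice of $(L,R,f)$ and defines an action of $T$ on $Z$. *)

theory Defs
  imports Main
begin

text \<open>Words over {0,1} are bool lists (False = 0, True = 1). The set Z = words plus an
extra symbol zeta.\<close>

datatype zel = W "bool list" | Zeta

text \<open>Lexicographic order: append 1/2 1/2 ... and compare with 0 < 1/2 < 1.
We code 0, 1/2, 1 as 0, 1, 2.\<close>

definition wcode :: "bool list \<Rightarrow> nat \<Rightarrow> nat" where
  "wcode x i = (if i < length x then (if x ! i then 2 else 0) else 1)"

definition wlt :: "bool list \<Rightarrow> bool list \<Rightarrow> bool" where
  "wlt x y \<longleftrightarrow> (\<exists>i. wcode x i < wcode y i \<and> (\<forall>j<i. wcode x j = wcode y j))"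

fun zlt :: "zel \<Rightarrow> zel \<Rightarrow> bool" where
  "zlt (W x) (W y) = wlt x y"
| "zlt (W x) Zeta = True"
| "zlt Zeta _ = False"

definition is_tree :: "bool list set \<Rightarrow> bool" where
  "is_tree R \<longleftrightarrow> finite R \<and> [] \<in> R \<and> (\<forall>x y. x @ y \<in> R \<longrightarrow> x \<in> R)
     \<and> (\<forall>x\<in>R. (x @ [False] \<in> R) = (x @ [True] \<in> R))"

definition tnodes :: "bool list set \<Rightarrow> bool list set" where
  "tnodes R = {x \<in> R. x @ [False] \<in> R}"

definition tleaves :: "bool list set \<Rightarrow> bool list set" where
  "tleaves R = {x \<in> R. x @ [False] \<notin> R}"

definition enum :: "bool list set \<Rightarrow> bool list list" where
  "enum S = (THE xs. sorted_wrt wlt xs \<and> set xs = S)"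

definition nodesZ :: "bool list set \<Rightarrow> zel list" where
  "nodesZ R = map W (enum (tnodes R)) @ [Zeta]"

definition conc :: "bool list \<Rightarrow> (nat \<Rightarrow> bool) \<Rightarrow> (nat \<Rightarrow> bool)" where
  "conc l w = (\<lambda>n. if n < length l then l ! n else w (n - length l))"

definition thompson_rep :: "((nat \<Rightarrow> bool) \<Rightarrow> (nat \<Rightarrow> bool)) \<Rightarrow> bool list set \<Rightarrow> bool list set \<Rightarrow> nat \<Rightarrow> bool" where
  "thompson_rep v L R c \<longleftrightarrow> is_tree L \<and> is_tree R \<and>
     (let ls = enum (tleaves L); rs = enum (tleaves R); k = length ls in
       length rs = k \<and>
       (\<forall>i<k. \<forall>w. v (conc (ls ! i) w) = conc (rs ! ((i + c) mod k)) w))"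

definition ThompsonT :: "((nat \<Rightarrow> bool) \<Rightarrow> (nat \<Rightarrow> bool)) set" where
  "ThompsonT = {v. \<exists>L R c. thompson_rep v L R c}"

definition iota_data :: "bool list set \<Rightarrow> bool list set \<Rightarrow> nat \<Rightarrow> zel \<Rightarrow> zel" where
  "iota_data L R c x =
     (let ls = enum (tleaves L); rs = enum (tleaves R); k = length ls;
          nL = nodesZ L; nR = nodesZ R in
      if x \<in> set nL then nR ! (((THE j. j < length nL \<and> nL ! j = x) + c) mod k)
      else (case x of
              W w \<Rightarrow> (let i = (THE i. i < k \<and> (\<exists>s. w = ls ! i @ s)) in
                        W (rs ! ((i + c) mod k) @ drop (length (ls ! i)) w))
            | Zeta \<Rightarrow> Zeta))"

text \<open>iota(v): independent of the chosen representation (as stated in the paper),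
so we may pick any one.\<close>

definition iota :: "((nat \<Rightarrow> bool) \<Rightarrow> (nat \<Rightarrow> bool)) \<Rightarrow> zel \<Rightarrow> zel" where
  "iota v = (SOME g. \<exists>L R c. thompson_rep v L R c \<and> g = iota_data L R c)"

definition Lambda :: "nat \<Rightarrow> zel list set" where
  "Lambda n = {xs. length xs = n \<and> distinct xs \<and> (\<exists>k. sorted_wrt zlt (rotate k xs))}"

end

theory Submission
  imports Defs Complex_Main
begin

text \<open>Reading a word \<open>x\<close> as the dyadic number \<open>0.x1\<close> and \<open>\<zeta>\<close> as \<open>1\<close> embeds \<open>(Z, \<le>\<^sub>l\<^sub>e\<^sub>x)\<close>
  into the reals. A tree \<open>R\<close> cuts \<open>[0, 1]\<close> into the dyadic intervals of its leaves, whose right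
  endpoints are exactly the elements of \<open>nodes(R) \<union> {\<zeta>}\<close>. If \<open>(L, R, c)\<close> represents \<open>v\<close>, then
  \<open>\<iota>(v)\<close> maps the interval of the \<open>i\<close>-th leaf of \<open>L\<close> increasingly onto that of the \<open>(i + c)\<close>-th
  leaf of \<open>R\<close>, so it rotates the cyclic order and preserves \<open>\<Lambda>\<^sub>n\<close>. For transitivity, both increasing
  tuples are put among the nodes of one complete tree; expanding leaves moves their entries to
  equally spaced positions \<open>P, P + g, P + 2g, \<dots>\<close> of trees with the same number \<open>n g\<close> of leaves,
  and a suitable cyclic shift then maps the first tuple onto any rotation of the second.\<close>

section \<open>The lexicographic order via dyadic values\<close>

lemma wcode_Nil [simp]: "wcode [] i = 1"
  by (simp add: wcode_def)

lemma wcode_Cons_0 [simp]: "wcode (a # x) 0 = (if a then 2 else 0)"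
  by (simp add: wcode_def)

lemma wcode_Cons_Suc [simp]: "wcode (a # x) (Suc i) = wcode x i"
  by (simp add: wcode_def)

lemma ex_nat_0_or_Suc: "(\<exists>i::nat. P i) \<longleftrightarrow> P 0 \<or> (\<exists>i. P (Suc i))"
  by (metis not0_implies_Suc)

lemma wlt_Cons_Cons: "wlt (a # x) (b # y) \<longleftrightarrow> (if a = b then wlt x y else b)"
  unfolding wlt_def by (subst ex_nat_0_or_Suc) (auto simp: All_less_Suc2)

lemma wlt_Nil_Cons: "wlt [] (b # y) \<longleftrightarrow> b"
  unfolding wlt_def by (subst ex_nat_0_or_Suc) (auto simp: All_less_Suc2)

lemma wlt_Cons_Nil: "wlt (a # x) [] \<longleftrightarrow> \<not> a"
  unfolding wlt_def by (subst ex_nat_0_or_Suc) (auto simp: All_less_Suc2)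

lemma wlt_Nil_Nil: "\<not> wlt [] []"
  unfolding wlt_def by simp

fun word_val :: "bool list \<Rightarrow> real" where
  "word_val [] = 1/2"
| "word_val (b # x) = (if b then 1/2 else 0) + word_val x / 2"

fun zval :: "zel \<Rightarrow> real" where
  "zval (W x) = word_val x"
| "zval Zeta = 1"

lemma word_val_bounds: "0 < word_val x \<and> word_val x < 1"
  by (induction x) auto

lemma wlt_iff_word_val: "wlt x y \<longleftrightarrow> word_val x < word_val y"
proof (induction x arbitrary: y)
  case Nil
  show ?case
  proof (cases y)
    case (Cons b y')
    then show ?thesis
      using word_val_bounds[of y'] by (auto simp: wlt_Nil_Cons)
  qed (simp add: wlt_Nil_Nil)
next
  case (Cons a x)
  show ?case
  proof (cases y)
    case Nil
    then show ?thesis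
      using word_val_bounds[of x] by (auto simp: wlt_Cons_Nil)
  next
    case (Cons b y')
    then show ?thesis
      using Cons.IH word_val_bounds[of x] word_val_bounds[of y'] by (auto simp: wlt_Cons_Cons)
  qed
qed

lemma word_val_inj: "word_val x = word_val y \<Longrightarrow> x = y"
proof (induction x arbitrary: y)
  case Nil
  show ?case
  proof (cases y)
    case (Cons b y')
    then show ?thesis
      using Nil word_val_bounds[of y'] by (auto split: if_splits)
  qed simp
next
  case (Cons a x)
  show ?case
  proof (cases y)
    case Nil
    then show ?thesis
      using Cons.prems word_val_bounds[of x] by (auto split: if_splits)
  next
    case (Cons b y')
    then show ?thesis
      using Cons.IH Cons.prems word_val_bounds[of x] word_val_bounds[of y'] by (auto split: if_splits)
  qed
qed

lemma zval_le_1: "zval z \<le> 1"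
  using word_val_bounds by (cases z) (auto simp: less_imp_le)

lemma zlt_iff_zval: "zlt z z' \<longleftrightarrow> zval z < zval z'"
  using word_val_bounds zval_le_1[of z'] by (cases z; cases z') (auto simp: wlt_iff_word_val)

lemma zval_inj: "zval z = zval z' \<Longrightarrow> z = z'"
  using word_val_bounds word_val_inj by (cases z; cases z') (auto, (metis less_irrefl)+)

lemma sorted_wlt_iff: "sorted_wrt wlt xs \<longleftrightarrow> sorted_wrt (<) (map word_val xs)"
proof -
  have "wlt = (\<lambda>x y. word_val x < word_val y)"
    by (auto simp: fun_eq_iff wlt_iff_word_val)
  then show ?thesis
    by (simp add: sorted_wrt_map)
qed

lemma enum_eq: "sorted_wrt wlt xs \<Longrightarrow> enum (set xs) = xs"
proof -
  assume sorted: "sorted_wrt wlt xs"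
  have "ys = xs" if "sorted_wrt wlt ys" "set ys = set xs" for ys
  proof -
    have "map word_val ys = map word_val xs"
      using that sorted by (intro strict_sorted_equal) (auto simp: sorted_wlt_iff)
    moreover have "inj word_val"
      using word_val_inj by (auto intro: injI)
    ultimately show ?thesis
      by (simp add: inj_map_eq_map)
  qed
  then show ?thesis
    unfolding enum_def using sorted by (intro the_equality) auto
qed

section \<open>Finite binary trees\<close>

datatype btree = Leaf | Node btree btree

fun words :: "btree \<Rightarrow> bool list set" where
  "words Leaf = {[]}"
| "words (Node a b) = insert [] (Cons False ` words a \<union> Cons True ` words b)"

fun leaves :: "btree \<Rightarrow> bool list list" where
  "leaves Leaf = [[]]"
| "leaves (Node a b) = map (Cons False) (leaves a) @ map (Cons True) (leaves b)"

fun nodes :: "btree \<Rightarrow> bool list list" where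
  "nodes Leaf = []"
| "nodes (Node a b) = map (Cons False) (nodes a) @ [[]] @ map (Cons True) (nodes b)"

definition znodes :: "btree \<Rightarrow> zel list" where
  "znodes t = map W (nodes t) @ [Zeta]"

lemma Cons_in_Cons_image [simp]: "a # x \<in> Cons b ` S \<longleftrightarrow> a = b \<and> x \<in> S"
  by auto

lemma Nil_notin_Cons_image [simp]: "[] \<notin> Cons b ` S"
  by auto

lemma length_leaves: "length (leaves t) = Suc (length (nodes t))"
  by (induction t) auto

lemma leaves_nonempty: "leaves t \<noteq> []"
  by (induction t) auto

lemma length_znodes: "length (znodes t) = length (leaves t)"
  by (simp add: znodes_def length_leaves)

lemma Nil_in_words: "[] \<in> words t"
  by (cases t) auto

lemma is_tree_words: "is_tree (words t)"
proof -
  have "finite (words t)"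
    by (induction t) auto
  moreover have "x \<in> words t" if "x @ y \<in> words t" for x y
    using that
  proof (induction t arbitrary: x)
    case (Node a b)
    then show ?case
      by (cases x) (auto simp: Nil_in_words)
  qed simp
  moreover have "(x @ [False] \<in> words t) = (x @ [True] \<in> words t)" if "x \<in> words t" for x
    using that
  proof (induction t arbitrary: x)
    case (Node a b)
    then show ?case
      by (cases x) (auto simp: Nil_in_words)
  qed simp
  ultimately show ?thesis
    unfolding is_tree_def using Nil_in_words by blast
qed

lemma set_leaves: "set (leaves t) = tleaves (words t)"
proof -
  have "x \<in> set (leaves t) \<longleftrightarrow> x \<in> words t \<and> x @ [False] \<notin> words t" for x
  proof (induction t arbitrary: x)
    case (Node a b)
    then show ?case
      by (cases x) (auto simp: Nil_in_words)
  qed simp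
  then show ?thesis
    unfolding tleaves_def by blast
qed

lemma set_nodes: "set (nodes t) = tnodes (words t)"
proof -
  have "x \<in> set (nodes t) \<longleftrightarrow> x \<in> words t \<and> x @ [False] \<in> words t" for x
  proof (induction t arbitrary: x)
    case (Node a b)
    then show ?case
      by (cases x) (auto simp: Nil_in_words)
  qed simp
  then show ?thesis
    unfolding tnodes_def by blast
qed

lemma sorted_leaves: "sorted_wrt wlt (leaves t)"
  by (induction t) (auto simp: sorted_wrt_append sorted_wrt_map wlt_Cons_Cons)

lemma sorted_nodes: "sorted_wrt wlt (nodes t)"
  by (induction t) (auto simp: sorted_wrt_append sorted_wrt_map wlt_Cons_Cons wlt_Cons_Nil wlt_Nil_Cons)

lemma sorted_znodes: "sorted_wrt zlt (znodes t)"
  using sorted_nodes[of t] by (simp add: znodes_def sorted_wrt_append sorted_wrt_map)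

lemma distinct_leaves: "distinct (leaves t)"
  using sorted_leaves[of t] by (simp add: sorted_wlt_iff strict_sorted_iff distinct_map)

lemma distinct_nodes: "distinct (nodes t)"
  using sorted_nodes[of t] by (simp add: sorted_wlt_iff strict_sorted_iff distinct_map)

lemma distinct_znodes: "distinct (znodes t)"
  using distinct_nodes[of t] by (auto simp: znodes_def distinct_map inj_on_def)

lemma enum_tleaves_words: "enum (tleaves (words t)) = leaves t"
  by (simp flip: set_leaves add: enum_eq sorted_leaves)

lemma nodesZ_words: "nodesZ (words t) = znodes t"
  by (simp flip: set_nodes add: nodesZ_def znodes_def enum_eq sorted_nodes)

lemma insert_Nil_Cons_split:
  "[] \<in> S \<Longrightarrow> S = insert [] (Cons False ` {w. False # w \<in> S} \<union> Cons True ` {w. True # w \<in> S})"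
  by (auto simp: image_iff) (metis (full_types) list.exhaust)

lemma is_tree_subtree:
  assumes "is_tree S" "[b] \<in> S"
  shows "is_tree {w. b # w \<in> S}"
  unfolding is_tree_def
proof (intro conjI allI impI ballI)
  have "{w. b # w \<in> S} = Cons b -` S"
    by auto
  then show "finite {w. b # w \<in> S}"
    using assms(1) by (simp add: is_tree_def finite_vimageI)
  show "[] \<in> {w. b # w \<in> S}"
    using assms(2) by simp
  fix x
  show "x \<in> {w. b # w \<in> S}" if "x @ y \<in> {w. b # w \<in> S}" for y
    using that assms(1) unfolding is_tree_def by (metis append_Cons mem_Collect_eq)
  show "(x @ [False] \<in> {w. b # w \<in> S}) = (x @ [True] \<in> {w. b # w \<in> S})" if "x \<in> {w. b # w \<in> S}"
    using that assms(1) unfolding is_tree_def by (metis append_Cons mem_Collect_eq)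
qed

lemma is_tree_bounded_ex_words:
  "is_tree S \<Longrightarrow> \<forall>w\<in>S. length w \<le> n \<Longrightarrow> \<exists>t. S = words t"
proof (induction n arbitrary: S)
  case 0
  then have "S = {[]}"
    unfolding is_tree_def by auto
  then show ?case
    by (metis words.simps(1))
next
  case (Suc n)
  have "[] \<in> S" and prefix: "\<And>x y. x @ y \<in> S \<Longrightarrow> x \<in> S"
    using Suc.prems(1) by (auto simp: is_tree_def)
  show ?case
  proof (cases "[False] \<in> S")
    case False
    then have "[True] \<notin> S"
      using Suc.prems(1) \<open>[] \<in> S\<close> unfolding is_tree_def by (metis append_Nil)
    with False have "[b] \<notin> S" for b
      by (cases b) auto
    then have "{w. b # w \<in> S} = {}" for b
      using prefix[of "[b]"] by auto
    then have "S = {[]}"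
      using insert_Nil_Cons_split[OF \<open>[] \<in> S\<close>] by simp
    then show ?thesis
      by (metis words.simps(1))
  next
    case True
    then have "[True] \<in> S"
      using Suc.prems(1) \<open>[] \<in> S\<close> unfolding is_tree_def by (metis append_Nil)
    with True have "is_tree {w. b # w \<in> S}" for b
      using is_tree_subtree[OF Suc.prems(1)] by (cases b) auto
    moreover have "\<forall>w\<in>{w. b # w \<in> S}. length w \<le> n" for b
      using Suc.prems(2) by fastforce
    ultimately obtain a c where "{w. False # w \<in> S} = words a" "{w. True # w \<in> S} = words c"
      using Suc.IH by metis
    then have "S = words (Node a c)"
      using insert_Nil_Cons_split[OF \<open>[] \<in> S\<close>] by simp
    then show ?thesis ..
  qed
qed

lemma is_tree_obtain_btree:
  assumes "is_tree S"
  obtains t where "S = words t"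
proof -
  obtain n where "\<forall>w\<in>S. length w \<le> n"
    using assms finite_nat_set_iff_bounded_le[of "length ` S"] unfolding is_tree_def by auto
  then show ?thesis
    using is_tree_bounded_ex_words assms that by blast
qed

lemma nth_leaves_Node:
  "j < length (leaves a) + length (leaves b) \<Longrightarrow> leaves (Node a b) ! j =
     (if j < length (leaves a) then False # (leaves a ! j) else True # (leaves b ! (j - length (leaves a))))"
  by (simp add: nth_append)

lemma nth_nodes_Node:
  "i \<le> length (nodes a) + length (nodes b) \<Longrightarrow> nodes (Node a b) ! i =
     (if i < length (nodes a) then False # (nodes a ! i)
      else if i = length (nodes a) then [] else True # (nodes b ! (i - Suc (length (nodes a)))))"
  by (simp add: nth_append)

lemma length_leaves_Node [simp]: "length (leaves (Node a b)) = length (leaves a) + length (leaves b)"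
  by simp

lemma length_nodes_Node [simp]: "length (nodes (Node a b)) = Suc (length (nodes a) + length (nodes b))"
  by simp

lemma first_leaf: "\<exists>m. leaves t ! 0 = replicate m False"
proof (induction t)
  case Leaf
  then show ?case
    by (intro exI[of _ 0]) simp
next
  case (Node a b)
  then obtain m where "leaves a ! 0 = replicate m False"
    by blast
  then show ?case
    using leaves_nonempty[of a] by (intro exI[of _ "Suc m"]) (simp add: nth_append)
qed

lemma last_leaf: "\<exists>m. leaves t ! (length (leaves t) - 1) = replicate m True"
proof (induction t)
  case Leaf
  then show ?case
    by (intro exI[of _ 0]) simp
next
  case (Node a b)
  then obtain m where "leaves b ! (length (leaves b) - 1) = replicate m True"
    by blast
  moreover have "length (leaves b) > 0"
    using leaves_nonempty[of b] by simp
  then have "\<not> length (leaves a) + length (leaves b) - 1 < length (leaves a)"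
    and "length (leaves a) + length (leaves b) - 1 - length (leaves a) = length (leaves b) - 1"
    by linarith+
  then have "leaves (Node a b) ! (length (leaves (Node a b)) - 1) = True # (leaves b ! (length (leaves b) - 1))"
    using \<open>length (leaves b) > 0\<close> by (subst nth_leaves_Node) auto
  ultimately show ?case
    by (intro exI[of _ "Suc m"]) simp
qed

lemma leaf_Suc_after_node:
  "i < length (nodes t) \<Longrightarrow> \<exists>m. leaves t ! Suc i = nodes t ! i @ True # replicate m False"
proof (induction t arbitrary: i)
  case (Node a b)
  let ?na = "length (nodes a)"
  have ka: "length (leaves a) = Suc ?na"
    by (rule length_leaves)
  consider "i < ?na" | "i = ?na" | "i > ?na"
    by linarith
  then show ?case
  proof cases
    case 1
    then obtain m where "leaves a ! Suc i = nodes a ! i @ True # replicate m False"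
      using Node.IH(1) by blast
    then show ?thesis
      using 1 ka by (intro exI[of _ m]) (simp del: leaves.simps nodes.simps add: nth_leaves_Node nth_nodes_Node)
  next
    case 2
    obtain m where "leaves b ! 0 = replicate m False"
      using first_leaf by blast
    then show ?thesis
      using 2 ka leaves_nonempty[of b]
      by (intro exI[of _ m]) (simp del: leaves.simps nodes.simps add: nth_leaves_Node nth_nodes_Node)
  next
    case 3
    define i' where "i' = i - Suc ?na"
    have "i' < length (nodes b)"
      using Node.prems 3 unfolding i'_def by simp
    then obtain m where "leaves b ! Suc i' = nodes b ! i' @ True # replicate m False"
      using Node.IH(2) by blast
    moreover have "Suc i - length (leaves a) = Suc i'"
      using 3 ka unfolding i'_def by simp
    ultimately show ?thesis
      using Node.prems 3 ka
      by (intro exI[of _ m]) (simp del: leaves.simps nodes.simps add: nth_leaves_Node nth_nodes_Node i'_def length_leaves)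
  qed
qed simp

lemma leaf_before_node:
  "i < length (nodes t) \<Longrightarrow> \<exists>m. leaves t ! i = nodes t ! i @ False # replicate m True"
proof (induction t arbitrary: i)
  case (Node a b)
  let ?na = "length (nodes a)"
  have ka: "length (leaves a) = Suc ?na"
    by (rule length_leaves)
  consider "i < ?na" | "i = ?na" | "i > ?na"
    by linarith
  then show ?case
  proof cases
    case 1
    then obtain m where "leaves a ! i = nodes a ! i @ False # replicate m True"
      using Node.IH(1) by blast
    then show ?thesis
      using 1 ka by (intro exI[of _ m]) (simp del: leaves.simps nodes.simps add: nth_leaves_Node nth_nodes_Node)
  next
    case 2
    obtain m where "leaves a ! (length (leaves a) - 1) = replicate m True"
      using last_leaf by blast
    then show ?thesis
      using 2 ka by (intro exI[of _ m]) (simp del: leaves.simps nodes.simps add: nth_leaves_Node nth_nodes_Node)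
  next
    case 3
    define i' where "i' = i - Suc ?na"
    have "i' < length (nodes b)"
      using Node.prems 3 unfolding i'_def by simp
    then obtain m where "leaves b ! i' = nodes b ! i' @ False # replicate m True"
      using Node.IH(2) by blast
    moreover have "i - length (leaves a) = i'"
      using 3 ka unfolding i'_def by simp
    ultimately show ?thesis
      using Node.prems 3 ka
      by (intro exI[of _ m]) (simp del: leaves.simps nodes.simps add: nth_leaves_Node nth_nodes_Node i'_def length_leaves)
  qed
qed simp

lemma word_node_or_below_leaf: "w \<in> set (nodes t) \<or> (\<exists>l\<in>set (leaves t). \<exists>s. w = l @ s)"
proof (induction t arbitrary: w)
  case (Node a b)
  show ?case
  proof (cases w)
    case (Cons c w')
    show ?thesis
    proof (cases "w' \<in> set (nodes (if c then b else a))")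
      case True
      then show ?thesis
        using Cons by (cases c) auto
    next
      case False
      then obtain l s where "l \<in> set (leaves (if c then b else a))" "w' = l @ s"
        using Node.IH[of w'] by (cases c) auto
      then show ?thesis
        using Cons by (intro disjI2 bexI[of _ "c # l"]) (cases c; auto)+
    qed
  qed simp
qed simp

lemma leaves_prefix_free: "l \<in> set (leaves t) \<Longrightarrow> l @ s \<in> set (leaves t) \<Longrightarrow> s = []"
proof (induction t arbitrary: l)
  case (Node a b)
  then obtain c l' where "l = c # l'"
    by auto
  then show ?case
    using Node by (cases c) auto
qed simp

lemma nth_leaves_append_unique:
  assumes "i < length (leaves t)" "j < length (leaves t)" "leaves t ! i @ s = leaves t ! j @ s'"
  shows "i = j"
proof -
  have "leaves t ! i \<in> set (leaves t)" "leaves t ! j \<in> set (leaves t)"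
    using assms by auto
  moreover obtain us where "leaves t ! i = leaves t ! j @ us \<or> leaves t ! i @ us = leaves t ! j"
    using assms(3) append_eq_append_conv2 by blast
  ultimately have "leaves t ! i = leaves t ! j"
    using leaves_prefix_free by (metis append.right_neutral)
  then show ?thesis
    using distinct_leaves[of t] assms(1,2) nth_eq_iff_index_eq by metis
qed

fun expand :: "btree \<Rightarrow> nat \<Rightarrow> btree" where
  "expand Leaf i = Node Leaf Leaf"
| "expand (Node a b) i =
     (if i < length (leaves a) then Node (expand a i) b else Node a (expand b (i - length (leaves a))))"

lemma nodes_expand:
  "i < length (leaves t) \<Longrightarrow> nodes (expand t i) = take i (nodes t) @ [leaves t ! i] @ drop i (nodes t)"
proof (induction t arbitrary: i)
  case (Node a b)
  have ka: "length (leaves a) = Suc (length (nodes a))"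
    by (rule length_leaves)
  show ?case
  proof (cases "i < length (leaves a)")
    case True
    then show ?thesis
      using Node.IH(1) ka by (simp add: nth_append take_map drop_map)
  next
    case False
    then have "i - length (nodes a) = Suc (i - Suc (length (nodes a)))"
      using ka by simp
    then show ?thesis
      using False Node.IH(2) Node.prems ka by (simp add: nth_append take_map drop_map)
  qed
qed simp

lemma length_leaves_expand: "i < length (leaves t) \<Longrightarrow> length (leaves (expand t i)) = Suc (length (leaves t))"
  using nodes_expand[of i t] length_leaves[of t] length_leaves[of "expand t i"] by simp

lemma nth_znodes_expand:
  assumes "i < length (leaves t)" "p < length (leaves t)"
  shows "znodes (expand t i) ! (if i \<le> p then Suc p else p) = znodes t ! p"
proof -
  have "znodes (expand t i) = take i (znodes t) @ [W (leaves t ! i)] @ drop i (znodes t)"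
    using assms(1) length_leaves[of t] by (simp add: znodes_def nodes_expand take_map drop_map)
  then show ?thesis
    using assms length_znodes[of t] by (simp add: nth_append min_def)
qed

fun complete_tree :: "nat \<Rightarrow> btree" where
  "complete_tree 0 = Leaf"
| "complete_tree (Suc d) = Node (complete_tree d) (complete_tree d)"

lemma set_nodes_complete_tree: "set (nodes (complete_tree d)) = {w. length w < d}"
proof (induction d)
  case (Suc d)
  show ?case
  proof (intro set_eqI iffI)
    fix w :: "bool list"
    assume "w \<in> {w. length w < Suc d}"
    then show "w \<in> set (nodes (complete_tree (Suc d)))"
    proof (cases w)
      case (Cons c w')
      then show ?thesis
        using Suc \<open>w \<in> {w. length w < Suc d}\<close> by (cases c) auto
    qed simp
  qed (use Suc in auto)
qed simp

section \<open>Independence of the representation\<close>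

lemma iota_data_words:
  "iota_data (words tL) (words tR) c x =
     (let k = length (leaves tL) in
      if x \<in> set (znodes tL)
      then znodes tR ! (((THE j. j < length (znodes tL) \<and> znodes tL ! j = x) + c) mod k)
      else (case x of
              W w \<Rightarrow> (let i = (THE i. i < k \<and> (\<exists>s. w = leaves tL ! i @ s)) in
                        W (leaves tR ! ((i + c) mod k) @ drop (length (leaves tL ! i)) w))
            | Zeta \<Rightarrow> Zeta))"
  unfolding iota_data_def enum_tleaves_words nodesZ_words by (simp add: Let_def)

lemma iota_data_znode:
  assumes "i < length (leaves tL)"
  shows "iota_data (words tL) (words tR) c (znodes tL ! i) = znodes tR ! ((i + c) mod length (leaves tL))"
proof -
  have "(THE j. j < length (znodes tL) \<and> znodes tL ! j = znodes tL ! i) = i"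
    using assms distinct_znodes[of tL] length_znodes[of tL]
    by (intro the_equality) (auto simp: nth_eq_iff_index_eq)
  then show ?thesis
    using assms length_znodes[of tL] by (simp add: iota_data_words)
qed

lemma iota_data_below_leaf:
  assumes "i < length (leaves tL)" "W (leaves tL ! i @ s) \<notin> set (znodes tL)"
  shows "iota_data (words tL) (words tR) c (W (leaves tL ! i @ s)) =
    W (leaves tR ! ((i + c) mod length (leaves tL)) @ s)"
proof -
  have "(THE i'. i' < length (leaves tL) \<and> (\<exists>s'. leaves tL ! i @ s = leaves tL ! i' @ s')) = i"
    using assms(1) nth_leaves_append_unique[of _ tL] by (intro the_equality) blast+
  then show ?thesis
    using assms by (simp add: iota_data_words Let_def)
qed

lemma zel_cases_btree:
  obtains (node) i where "i < length (leaves t)" "z = znodes t ! i"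
  | (below_leaf) i s where "i < length (leaves t)" "z = W (leaves t ! i @ s)" "z \<notin> set (znodes t)"
proof (cases "z \<in> set (znodes t)")
  case True
  then show ?thesis
    using node length_znodes by (metis in_set_conv_nth)
next
  case False
  then obtain w where w: "z = W w" "w \<notin> set (nodes t)"
    by (cases z) (auto simp: znodes_def)
  then obtain l s where "l \<in> set (leaves t)" "w = l @ s"
    using word_node_or_below_leaf by blast
  then show ?thesis
    using below_leaf w False by (metis in_set_conv_nth)
qed

lemma thompson_rep_words:
  "thompson_rep v (words tL) (words tR) c \<longleftrightarrow>
   length (leaves tR) = length (leaves tL) \<and>
   (\<forall>i<length (leaves tL). \<forall>w. v (conc (leaves tL ! i) w) =
      conc (leaves tR ! ((i + c) mod length (leaves tL))) w)"
  unfolding thompson_rep_def enum_tleaves_words Let_def using is_tree_words by blast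

lemma conc_append: "conc (l @ m) w = conc l (conc m w)"
  by (rule ext) (auto simp: conc_def nth_append)

lemma conc_replicate_False: "conc (replicate m False) (\<lambda>_. False) = (\<lambda>_. False)"
  by (rule ext) (auto simp: conc_def)

text \<open>Embedding of \<open>Z\<close> into Cantor space: \<open>x \<mapsto> x1000\<dots>\<close> and \<open>\<zeta> \<mapsto> 000\<dots>\<close>. Every \<open>v \<in> T\<close> acts on
  it through \<^const>\<open>iota_data\<close> of each of its representations, because the leaf following the node
  \<open>x\<close> of a tree has the form \<open>x10\<dots>0\<close>, and the leaf following \<open>\<zeta>\<close> (cyclically, the first one) the
  form \<open>0\<dots>0\<close>.\<close>

fun zcode :: "zel \<Rightarrow> nat \<Rightarrow> bool" where
  "zcode (W x) = conc (x @ [True]) (\<lambda>_. False)"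
| "zcode Zeta = (\<lambda>_. False)"

lemma zcode_W_nth: "zcode (W x) n = (n < length x \<and> x ! n \<or> n = length x)"
  by (auto simp: conc_def nth_append)

lemma inj_zcode: "inj zcode"
proof (rule injI)
  fix z z' assume eq: "zcode z = zcode z'"
  show "z = z'"
  proof (cases z; cases z')
    fix x y assume xy: "z = W x" "z' = W y"
    have "length x = length y"
      using fun_cong[OF eq, of "max (length x) (length y)"] xy
      by (auto simp del: zcode.simps(1) simp add: zcode_W_nth max_def split: if_splits)
    moreover have "x ! n = y ! n" if "n < length x" for n
      using fun_cong[OF eq, of n] that xy \<open>length x = length y\<close>
      by (auto simp del: zcode.simps(1) simp add: zcode_W_nth)
    ultimately show ?thesis
      using xy by (simp add: nth_equalityI)
  qed (use eq zcode_W_nth in \<open>auto dest!: fun_cong[where x = "length _"]\<close>)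
qed

lemma conc_leaf_Suc_eq_zcode:
  assumes "i < length (leaves t)"
  shows "conc (leaves t ! ((i + 1) mod length (leaves t))) (\<lambda>_. False) = zcode (znodes t ! i)"
proof (cases "i < length (nodes t)")
  case True
  then obtain m where m: "leaves t ! Suc i = nodes t ! i @ True # replicate m False"
    using leaf_Suc_after_node by blast
  have "(i + 1) mod length (leaves t) = Suc i"
    using True length_leaves[of t] by simp
  moreover have "conc (True # replicate m False) (\<lambda>_. False) = conc [True] (\<lambda>_. False)"
    using conc_append[of "[True]" "replicate m False"] by (simp add: conc_replicate_False)
  ultimately show ?thesis
    using m True by (simp add: znodes_def nth_append conc_append)
next
  case False
  then have "i = length (nodes t)"
    using assms length_leaves[of t] by simp
  moreover from this have "(i + 1) mod length (leaves t) = 0"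
    using length_leaves[of t] by simp
  moreover obtain m where "leaves t ! 0 = replicate m False"
    using first_leaf by blast
  ultimately show ?thesis
    by (simp add: znodes_def nth_append conc_replicate_False)
qed

lemma thompson_rep_zcode:
  assumes "thompson_rep v (words tL) (words tR) c"
  shows "v (zcode z) = zcode (iota_data (words tL) (words tR) c z)"
proof -
  let ?k = "length (leaves tL)"
  have kR: "length (leaves tR) = ?k"
    and v: "\<And>i w. i < ?k \<Longrightarrow> v (conc (leaves tL ! i) w) = conc (leaves tR ! ((i + c) mod ?k)) w"
    using assms by (auto simp: thompson_rep_words)
  have "?k > 0"
    using leaves_nonempty[of tL] by simp
  show ?thesis
  proof (cases z rule: zel_cases_btree[of tL])
    case (node i)
    have "v (zcode z) = v (conc (leaves tL ! ((i + 1) mod ?k)) (\<lambda>_. False))"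
      using conc_leaf_Suc_eq_zcode[OF node(1)] node(2) by simp
    also have "\<dots> = conc (leaves tR ! (((i + 1) mod ?k + c) mod ?k)) (\<lambda>_. False)"
      using v \<open>?k > 0\<close> by simp
    also have "((i + 1) mod ?k + c) mod ?k = ((i + c) mod ?k + 1) mod ?k"
      by (simp add: mod_simps)
    also have "conc (leaves tR ! \<dots>) (\<lambda>_. False) = zcode (znodes tR ! ((i + c) mod ?k))"
      using conc_leaf_Suc_eq_zcode[of "(i + c) mod ?k" tR] kR \<open>?k > 0\<close> by simp
    finally show ?thesis
      using iota_data_znode[OF node(1)] node(2) by simp
  next
    case (below_leaf i s)
    then have "v (zcode z) = conc (leaves tR ! ((i + c) mod ?k)) (conc (s @ [True]) (\<lambda>_. False))"
      using v by (simp add: conc_append)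
    then show ?thesis
      using iota_data_below_leaf[OF below_leaf(1)] below_leaf by (simp add: conc_append)
  qed
qed

lemma iota_eq_iota_data:
  assumes "thompson_rep v L R c"
  shows "iota v = iota_data L R c"
proof -
  have "\<exists>g. \<exists>L R c. thompson_rep v L R c \<and> g = iota_data L R c"
    using assms by blast
  from someI_ex[OF this] obtain L' R' c' where rep': "thompson_rep v L' R' c'"
    and iota: "iota v = iota_data L' R' c'"
    unfolding iota_def by blast
  have "zcode (iota_data L' R' c' z) = zcode (iota_data L R c z)" for z
  proof -
    obtain tL tR tL' tR' where "L = words tL" "R = words tR" "L' = words tL'" "R' = words tR'"
      using assms rep' is_tree_obtain_btree unfolding thompson_rep_def by metis
    then show ?thesis
      using thompson_rep_zcode assms rep' by metis
  qed
  then show ?thesis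
    using iota inj_zcode by (auto simp: inj_eq)
qed

section \<open>Preservation of the cyclic order\<close>

text \<open>\<open>[word_lo x, word_hi x]\<close> is the interval of reals whose binary expansion starts with \<open>x\<close>.\<close>

fun word_lo :: "bool list \<Rightarrow> real" where
  "word_lo [] = 0"
| "word_lo (b # x) = (if b then 1/2 else 0) + word_lo x / 2"

definition word_width :: "bool list \<Rightarrow> real" where
  "word_width x = (1/2) ^ length x"

definition word_hi :: "bool list \<Rightarrow> real" where
  "word_hi x = word_lo x + word_width x"

lemma word_width_pos: "word_width x > 0"
  by (simp add: word_width_def)

lemma word_lo_less_hi: "word_lo x < word_hi x"
  using word_width_pos by (simp add: word_hi_def)

lemma word_val_eq: "word_val x = word_lo x + word_width x / 2"
  by (induction x) (auto simp: word_width_def)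

lemma word_val_append: "word_val (l @ s) = word_lo l + word_val s * word_width l"
  by (induction l) (auto simp: word_width_def field_simps)

lemma word_lo_append: "word_lo (l @ s) = word_lo l + word_lo s * word_width l"
  by (induction l) (auto simp: word_width_def field_simps)

lemma word_lo_replicate_False: "word_lo (replicate m False) = 0"
  by (induction m) auto

lemma word_lo_replicate_True: "word_lo (replicate m True) = 1 - (1/2) ^ m"
  by (induction m) (auto simp: field_simps)

lemma word_lo_append_True_replicate: "word_lo (x @ True # replicate m False) = word_val x"
  by (simp add: word_lo_append word_lo_replicate_False word_val_eq)

lemma word_hi_append_False_replicate: "word_hi (x @ False # replicate m True) = word_val x"
  by (simp add: word_hi_def word_lo_append word_lo_replicate_True word_val_eq word_width_def
      field_simps power_add)

lemma word_lo_leaf_Suc: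
  "Suc i < length (leaves t) \<Longrightarrow> word_lo (leaves t ! Suc i) = word_hi (leaves t ! i)"
  using leaf_Suc_after_node[of i t] leaf_before_node[of i t] length_leaves[of t]
  by (auto simp: word_lo_append_True_replicate word_hi_append_False_replicate)

lemma zval_znode: "i < length (leaves t) \<Longrightarrow> zval (znodes t ! i) = word_hi (leaves t ! i)"
proof (cases "i < length (nodes t)")
  case True
  then show ?thesis
    using leaf_before_node[OF True] word_hi_append_False_replicate
    by (auto simp: znodes_def nth_append)
next
  case False
  moreover assume "i < length (leaves t)"
  ultimately have "i = length (leaves t) - 1" "i = length (nodes t)"
    using length_leaves[of t] by simp_all
  moreover obtain m where "leaves t ! (length (leaves t) - 1) = replicate m True"
    using last_leaf by blast
  ultimately show ?thesis
    by (simp add: znodes_def nth_append word_hi_def word_lo_replicate_True word_width_def)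
qed

lemma word_hi_le_lo_leaves:
  "i < j \<Longrightarrow> j < length (leaves t) \<Longrightarrow> word_hi (leaves t ! i) \<le> word_lo (leaves t ! j)"
proof (induction j)
  case (Suc j)
  show ?case
  proof (cases "i = j")
    case False
    then have "word_hi (leaves t ! i) \<le> word_lo (leaves t ! j)"
      using Suc by simp
    also have "\<dots> \<le> word_hi (leaves t ! j)"
      using word_lo_less_hi less_imp_le by blast
    finally show ?thesis
      using word_lo_leaf_Suc Suc.prems by simp
  qed (use word_lo_leaf_Suc Suc.prems in simp)
qed simp

text \<open>A node is the right endpoint of the interval of the leaf just before it, a word below a leaf
  lies inside the interval of that leaf.\<close>

lemma iota_data_affine:
  assumes "length (leaves tR) = length (leaves tL)"
  defines "k \<equiv> length (leaves tL)"
  obtains i where "i < k" "word_lo (leaves tL ! i) < zval z" "zval z \<le> word_hi (leaves tL ! i)"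
    "zval (iota_data (words tL) (words tR) c z) =
       word_lo (leaves tR ! ((i + c) mod k)) + (zval z - word_lo (leaves tL ! i)) *
         (word_width (leaves tR ! ((i + c) mod k)) / word_width (leaves tL ! i))"
proof -
  have "k > 0"
    using leaves_nonempty[of tL] by (simp add: k_def)
  show ?thesis
  proof (cases z rule: zel_cases_btree[of tL])
    case (node i)
    let ?j = "(i + c) mod k"
    have "?j < length (leaves tR)"
      using assms \<open>k > 0\<close> by simp
    then have "zval (iota_data (words tL) (words tR) c z) = word_hi (leaves tR ! ?j)"
      using iota_data_znode[OF node(1)] node(2) zval_znode by (simp add: k_def)
    moreover have "zval z = word_hi (leaves tL ! i)"
      using zval_znode[OF node(1)] node(2) by simp
    ultimately show ?thesis
      using that[of i] node(1) word_lo_less_hi[of "leaves tL ! i"] word_width_pos[of "leaves tL ! i"]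
      by (simp add: word_hi_def field_simps k_def)
  next
    case (below_leaf i s)
    let ?j = "(i + c) mod k"
    have z: "zval z = word_lo (leaves tL ! i) + word_val s * word_width (leaves tL ! i)"
      using below_leaf(2) by (simp add: word_val_append)
    have "zval (iota_data (words tL) (words tR) c z) =
        word_lo (leaves tR ! ?j) + word_val s * word_width (leaves tR ! ?j)"
      using iota_data_below_leaf[OF below_leaf(1)] below_leaf by (simp add: word_val_append k_def)
    moreover have "0 < word_val s" "word_val s < 1" "word_width (leaves tL ! i) > 0"
      using word_val_bounds word_width_pos by auto
    ultimately show ?thesis
      using that[of i] below_leaf(1) z by (simp add: word_hi_def field_simps k_def)
  qed
qed

lemma scaled_offset_bounds:
  fixes x w w' :: real
  assumes "0 < x" "x \<le> w" "0 < w'"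
  shows "0 < x * (w' / w)" "x * (w' / w) \<le> w'"
proof -
  have "0 < w"
    using assms by simp
  then show "0 < x * (w' / w)"
    using assms by simp
  have "x * (w' / w) \<le> w * (w' / w)"
    using assms \<open>0 < w\<close> by (intro mult_right_mono) simp_all
  then show "x * (w' / w) \<le> w'"
    using \<open>0 < w\<close> by simp
qed

lemma iota_data_blocks:
  fixes c :: nat
  assumes "length (leaves tR) = length (leaves tL)"
  defines "k \<equiv> length (leaves tL)" and "g \<equiv> iota_data (words tL) (words tR) c"
  obtains blk where "\<And>z. blk z < k"
    "\<And>z z'. zlt z z' \<Longrightarrow> blk z \<le> blk z'"
    "\<And>z z'. zlt z z' \<Longrightarrow> blk z = blk z' \<Longrightarrow> zlt (g z) (g z')"
    "\<And>z z'. (blk z + c) mod k < (blk z' + c) mod k \<Longrightarrow> zlt (g z) (g z')"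
proof -
  define r where "r i = leaves tR ! ((i + c) mod k)" for i
  define l where "l i = leaves tL ! i" for i
  have "\<forall>z. \<exists>i < k. word_lo (l i) < zval z \<and> zval z \<le> word_hi (l i) \<and>
     zval (g z) = word_lo (r i) + (zval z - word_lo (l i)) * (word_width (r i) / word_width (l i))"
    using iota_data_affine[OF assms(1)] unfolding l_def r_def k_def g_def by metis
  then obtain blk where blk: "\<And>z. blk z < k" "\<And>z. word_lo (l (blk z)) < zval z"
    "\<And>z. zval z \<le> word_hi (l (blk z))"
    and affine: "\<And>z. zval (g z) = word_lo (r (blk z)) +
      (zval z - word_lo (l (blk z))) * (word_width (r (blk z)) / word_width (l (blk z)))"
    by metis
  have image: "word_lo (r (blk z)) < zval (g z) \<and> zval (g z) \<le> word_hi (r (blk z))" for z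
    using scaled_offset_bounds[of "zval z - word_lo (l (blk z))" "word_width (l (blk z))"
        "word_width (r (blk z))"] blk(2,3)[of z] word_width_pos affine[of z]
    by (simp add: word_hi_def)
  show ?thesis
  proof (rule that)
    show "blk z < k" for z
      by (rule blk(1))
  next
    fix z z' assume "zlt z z'"
    show "blk z \<le> blk z'"
    proof (rule ccontr)
      assume "\<not> blk z \<le> blk z'"
      then have "word_hi (l (blk z')) \<le> word_lo (l (blk z))"
        using word_hi_le_lo_leaves blk(1) by (simp add: l_def k_def)
      then show False
        using blk(2)[of z] blk(3)[of z'] \<open>zlt z z'\<close> by (simp add: zlt_iff_zval)
    qed
  next
    fix z z' assume "zlt z z'" "blk z = blk z'"
    let ?q = "word_width (r (blk z)) / word_width (l (blk z))"
    have "0 < ?q"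
      using word_width_pos by simp
    then have "(zval z - word_lo (l (blk z))) * ?q < (zval z' - word_lo (l (blk z))) * ?q"
      using \<open>zlt z z'\<close> by (simp only: zlt_iff_zval mult_strict_right_mono diff_strict_right_mono)
    then show "zlt (g z) (g z')"
      using affine[of z] affine[of z'] \<open>blk z = blk z'\<close> by (simp add: zlt_iff_zval)
  next
    fix z z' assume "(blk z + c) mod k < (blk z' + c) mod k"
    then have "word_hi (r (blk z)) \<le> word_lo (r (blk z'))"
      using word_hi_le_lo_leaves[of _ _ tR] assms(1) leaves_nonempty[of tL]
      by (simp add: r_def k_def)
    then show "zlt (g z) (g z')"
      using image[of z] image[of z'] by (simp add: zlt_iff_zval)
  qed
qed

lemma sorted_rotate_map_if_cyclic_mono:
  fixes g :: "zel \<Rightarrow> zel" and D :: "zel set"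
  assumes down: "\<And>z z'. zlt z z' \<Longrightarrow> z' \<in> D \<Longrightarrow> z \<in> D"
    and mono_low: "\<And>z z'. zlt z z' \<Longrightarrow> z' \<in> D \<Longrightarrow> zlt (g z) (g z')"
    and mono_high: "\<And>z z'. zlt z z' \<Longrightarrow> z \<notin> D \<Longrightarrow> zlt (g z) (g z')"
    and wrap: "\<And>z z'. z \<in> D \<Longrightarrow> z' \<notin> D \<Longrightarrow> zlt (g z') (g z)"
    and sorted: "sorted_wrt zlt ys"
  shows "sorted_wrt zlt (rotate (length (takeWhile (\<lambda>z. z \<in> D) ys)) (map g ys))"
proof -
  define ds where "ds = takeWhile (\<lambda>z. z \<in> D) ys"
  define us where "us = dropWhile (\<lambda>z. z \<in> D) ys"
  have split: "ys = ds @ us"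
    by (simp add: ds_def us_def)
  have ds_D: "set ds \<subseteq> D"
    unfolding ds_def by (auto dest: set_takeWhileD)
  have us_D: "set us \<inter> D = {}"
  proof (cases us)
    case (Cons u us')
    have "u \<notin> D"
      using Cons unfolding us_def by (metis hd_dropWhile list.distinct(1) list.sel(1))
    moreover have "\<forall>u'\<in>set us'. zlt u u'"
      using sorted split Cons by (simp add: sorted_wrt_append)
    ultimately show ?thesis
      using Cons down by auto
  qed simp
  have "sorted_wrt zlt ds" and "sorted_wrt zlt us"
    using sorted split by (simp_all add: sorted_wrt_append)
  from this(2) have "sorted_wrt zlt (map g us)"
    unfolding sorted_wrt_map by (rule sorted_wrt_mono_rel[rotated]) (use us_D mono_high in blast)
  moreover from \<open>sorted_wrt zlt ds\<close> have "sorted_wrt zlt (map g ds)"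
    unfolding sorted_wrt_map by (rule sorted_wrt_mono_rel[rotated]) (use ds_D mono_low in blast)
  moreover have "zlt (g u) (g d)" if "u \<in> set us" "d \<in> set ds" for u d
    using that ds_D us_D wrap by blast
  ultimately have "sorted_wrt zlt (map g us @ map g ds)"
    by (auto simp: sorted_wrt_append)
  moreover have "map g ys = map g ds @ map g us"
    using split by simp
  moreover have "length (takeWhile (\<lambda>z. z \<in> D) ys) = length (map g ds)"
    by (simp add: ds_def)
  ultimately show ?thesis
    by (simp only: rotate_append)
qed

lemma map_in_Lambda_if_cyclic_mono:
  fixes g :: "zel \<Rightarrow> zel" and D :: "zel set"
  assumes down: "\<And>z z'. zlt z z' \<Longrightarrow> z' \<in> D \<Longrightarrow> z \<in> D"
    and mono_low: "\<And>z z'. zlt z z' \<Longrightarrow> z' \<in> D \<Longrightarrow> zlt (g z) (g z')"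
    and mono_high: "\<And>z z'. zlt z z' \<Longrightarrow> z \<notin> D \<Longrightarrow> zlt (g z) (g z')"
    and wrap: "\<And>z z'. z \<in> D \<Longrightarrow> z' \<notin> D \<Longrightarrow> zlt (g z') (g z)"
    and xs: "xs \<in> Lambda n"
  shows "map g xs \<in> Lambda n"
proof -
  have "g z \<noteq> g z'" if "zlt z z'" for z z'
    using that mono_low mono_high wrap zlt_iff_zval by (metis less_irrefl)
  then have "inj g"
    by (metis injI linorder_neqE zlt_iff_zval zval_inj)
  from xs obtain r where "sorted_wrt zlt (rotate r xs)"
    unfolding Lambda_def by blast
  with down mono_low mono_high wrap have "sorted_wrt zlt (rotate (length (takeWhile (\<lambda>z. z \<in> D) (rotate r xs)))
      (map g (rotate r xs)))"
    by (rule sorted_rotate_map_if_cyclic_mono)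
  then have "sorted_wrt zlt (rotate (length (takeWhile (\<lambda>z. z \<in> D) (rotate r xs)) + r) (map g xs))"
    by (simp add: rotate_rotate rotate_map)
  then show ?thesis
    using xs \<open>inj g\<close> unfolding Lambda_def by (auto simp: distinct_map inj_on_def)
qed

lemma add_mod_cases:
  fixes i k c :: nat
  assumes "i < k"
  shows "(i + c) mod k = (if i < k - c mod k then i + c mod k else i + c mod k - k)"
proof -
  have "c mod k < k"
    using assms by simp
  moreover have "(i + c) mod k = (i + c mod k) mod k"
    by (simp add: mod_add_right_eq)
  moreover have "(i + c mod k) mod k = i + c mod k - k" if "\<not> i < k - c mod k"
  proof -
    have "(i + c mod k) mod k = (i + c mod k - k) mod k"
      using that by (simp add: le_mod_geq)
    also have "\<dots> = i + c mod k - k"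
      using assms \<open>c mod k < k\<close> by (intro mod_less) linarith
    finally show ?thesis .
  qed
  ultimately show ?thesis
    using assms by auto
qed

lemma iota_data_preserves_Lambda:
  assumes "length (leaves tR) = length (leaves tL)" "xs \<in> Lambda n"
  shows "map (iota_data (words tL) (words tR) c) xs \<in> Lambda n"
proof -
  define k where "k = length (leaves tL)"
  define g where "g = iota_data (words tL) (words tR) c"
  obtain blk where blk: "\<And>z. blk z < k" "\<And>z z'. zlt z z' \<Longrightarrow> blk z \<le> blk z'"
    and same: "\<And>z z'. zlt z z' \<Longrightarrow> blk z = blk z' \<Longrightarrow> zlt (g z) (g z')"
    and shifted: "\<And>z z'. (blk z + c) mod k < (blk z' + c) mod k \<Longrightarrow> zlt (g z) (g z')"
    using iota_data_blocks[OF assms(1)] unfolding k_def g_def by metis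
  have shift: "(blk z + c) mod k = (if blk z < k - c mod k then blk z + c mod k else blk z + c mod k - k)"
    for z
    using add_mod_cases[OF blk(1)] .
  have "c mod k < k"
    using blk(1) by (metis mod_less_divisor not_less_zero not_gr_zero)
  \<comment> \<open>Blocks below \<open>k - c mod k\<close> move up by \<open>c mod k\<close>, the others wrap around to the front.\<close>
  show ?thesis
    unfolding g_def[symmetric]
  proof (rule map_in_Lambda_if_cyclic_mono[where D = "{z. blk z < k - c mod k}"])
    fix z z' assume "zlt z z'" "z' \<in> {z. blk z < k - c mod k}"
    then show "z \<in> {z. blk z < k - c mod k}"
      using blk(2) by fastforce
    show "zlt (g z) (g z')"
      using blk(2)[OF \<open>zlt z z'\<close>] same[OF \<open>zlt z z'\<close>] shifted \<open>z' \<in> _\<close> shift[of z] shift[of z']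
      by (cases "blk z = blk z'") auto
  next
    fix z z' assume "zlt z z'" "z \<notin> {z. blk z < k - c mod k}"
    then show "zlt (g z) (g z')"
      using blk(1)[of z'] blk(2)[OF \<open>zlt z z'\<close>] same[OF \<open>zlt z z'\<close>] shifted[of z z']
        shift[of z] shift[of z'] \<open>c mod k < k\<close>
      by (cases "blk z = blk z'") (auto simp: not_less)
  next
    fix z z' assume "z \<in> {z. blk z < k - c mod k}" "z' \<notin> {z. blk z < k - c mod k}"
    then show "zlt (g z') (g z)"
      using blk(1)[of z'] shifted[of z' z] shift[of z] shift[of z'] by auto
  qed (rule assms(2))
qed

lemma iota_preserves_Lambda:
  assumes "t \<in> ThompsonT" "xs \<in> Lambda n"
  shows "map (iota t) xs \<in> Lambda n"
proof -
  obtain L R c where rep: "thompson_rep t L R c"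
    using assms(1) unfolding ThompsonT_def by blast
  then obtain tL tR where "L = words tL" "R = words tR"
    using is_tree_obtain_btree unfolding thompson_rep_def by metis
  then show ?thesis
    using iota_eq_iota_data[OF rep] iota_data_preserves_Lambda assms(2) rep
    by (simp add: thompson_rep_words)
qed

section \<open>Transitivity\<close>

lemma mono_first_positive:
  fixes \<delta> :: "nat \<Rightarrow> nat"
  assumes "0 < \<delta> k" "\<And>i j. i \<le> j \<Longrightarrow> j \<le> k \<Longrightarrow> \<delta> i \<le> \<delta> j"
  obtains j0 where "j0 \<le> k" "\<And>j. j \<le> k \<Longrightarrow> j0 \<le> j \<longleftrightarrow> 0 < \<delta> j"
proof -
  obtain j0 where j0: "0 < \<delta> j0" "\<forall>j<j0. \<not> 0 < \<delta> j"
    using exists_least_iff[of "\<lambda>j. 0 < \<delta> j"] assms(1) by blast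
  then have "j0 \<le> k"
    using assms(1) not_less by blast
  moreover have "j0 \<le> j \<longleftrightarrow> 0 < \<delta> j" if "j \<le> k" for j
    using j0 assms(2)[of j0 j] that by (meson not_less order.strict_trans2)
  ultimately show thesis
    using that by blast
qed

lemma sorted_first_positive_position:
  fixes ps :: "nat list" and \<delta> :: "nat \<Rightarrow> nat"
  assumes "ps \<noteq> []" "sorted_wrt (<) ps" "0 < \<delta> (length ps - 1)"
    and "\<And>i j. i \<le> j \<Longrightarrow> j < length ps \<Longrightarrow> \<delta> i \<le> \<delta> j"
  obtains i where "i \<in> set ps" "\<And>j. j < length ps \<Longrightarrow> i \<le> ps ! j \<longleftrightarrow> 0 < \<delta> j"
proof -
  have n: "length ps > 0"
    using assms(1) by simp
  have "\<delta> i \<le> \<delta> j" if "i \<le> j" "j \<le> length ps - 1" for i j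
    using that n by (intro assms(4)) linarith+
  with assms(3) obtain j0 where "j0 \<le> length ps - 1"
    and j0: "\<And>j. j \<le> length ps - 1 \<Longrightarrow> j0 \<le> j \<longleftrightarrow> 0 < \<delta> j"
    by (rule mono_first_positive) auto
  then have "j0 < length ps"
    using n by linarith
  have "ps ! j0 \<le> ps ! j \<longleftrightarrow> 0 < \<delta> j" if "j < length ps" for j
  proof -
    have "ps ! j0 \<le> ps ! j \<longleftrightarrow> j0 \<le> j"
      using sorted_wrt_nth_less[OF assms(2), of j0 j] sorted_wrt_nth_less[OF assms(2), of j j0]
        that \<open>j0 < length ps\<close> by (cases j0 j rule: linorder_cases) auto
    then show ?thesis
      using j0[of j] that by simp
  qed
  then show thesis
    using that[of "ps ! j0"] \<open>j0 < length ps\<close> by simp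
qed

text \<open>Expanding the leaf just before the first position with a positive shift moves exactly the
  positions with positive shift one step to the right.\<close>

lemma expand_to_positions:
  assumes "ps \<noteq> []" "sorted_wrt (<) ps" "\<forall>p\<in>set ps. p < length (leaves t)"
    and "\<And>i j. i \<le> j \<Longrightarrow> j < length ps \<Longrightarrow> \<delta> i \<le> \<delta> j"
  shows "\<exists>t'. length (leaves t') = length (leaves t) + \<delta> (length ps - 1) \<and>
    (\<forall>j<length ps. znodes t' ! (ps ! j + \<delta> j) = znodes t ! (ps ! j))"
  using assms
proof (induction "\<delta> (length ps - 1)" arbitrary: t ps \<delta>)
  case 0
  have "\<delta> j = 0" if "j < length ps" for j
  proof -
    have "j \<le> length ps - 1"
      using that by linarith
    then show ?thesis
      using "0.hyps" "0.prems"(4)[of j "length ps - 1"] that by simp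
  qed
  then show ?case
    using "0.hyps" by (intro exI[of _ t]) simp
next
  case (Suc d)
  let ?n = "length ps"
  obtain i where "i \<in> set ps" and shifted: "\<And>j. j < ?n \<Longrightarrow> i \<le> ps ! j \<longleftrightarrow> 0 < \<delta> j"
    using sorted_first_positive_position[OF Suc.prems(1,2), of \<delta>] Suc.hyps(2) Suc.prems(4)
    by (metis zero_less_Suc)
  define ps' where "ps' = map (\<lambda>p. if i \<le> p then Suc p else p) ps"
  have i: "i < length (leaves t)"
    using Suc.prems(3) \<open>i \<in> set ps\<close> by blast
  have "\<exists>t'. length (leaves t') = length (leaves (expand t i)) + (\<delta> (length ps' - 1) - 1) \<and>
    (\<forall>j<length ps'. znodes t' ! (ps' ! j + (\<delta> j - 1)) = znodes (expand t i) ! (ps' ! j))"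
  proof (rule Suc.hyps(1))
    show "d = \<delta> (length ps' - 1) - 1"
      using Suc.hyps(2) by (simp add: ps'_def)
    show "ps' \<noteq> []"
      using Suc.prems(1) by (simp add: ps'_def)
    show "sorted_wrt (<) ps'"
      unfolding ps'_def sorted_wrt_map using Suc.prems(2) by (rule sorted_wrt_mono_rel[rotated]) auto
    show "\<forall>p\<in>set ps'. p < length (leaves (expand t i))"
      using Suc.prems(3) length_leaves_expand[OF i] by (auto simp: ps'_def)
    show "\<delta> j - 1 \<le> \<delta> j' - 1" if "j \<le> j'" "j' < length ps'" for j j'
      using Suc.prems(4)[of j j'] that by (simp add: ps'_def)
  qed
  then obtain t' where t': "length (leaves t') = Suc (length (leaves t)) + d"
    "\<And>j. j < ?n \<Longrightarrow> znodes t' ! (ps' ! j + (\<delta> j - 1)) = znodes (expand t i) ! (ps' ! j)"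
    using Suc.hyps(2)[symmetric] length_leaves_expand[OF i] by (auto simp: ps'_def)
  have "znodes t' ! (ps ! j + \<delta> j) = znodes t ! (ps ! j)" if "j < ?n" for j
    using t'(2)[OF that] nth_znodes_expand[OF i, of "ps ! j"] shifted[OF that] Suc.prems(3) that
    by (cases "0 < \<delta> j") (auto simp: ps'_def)
  then show ?case
    using t'(1) Suc.hyps(2) by (intro exI[of _ t']) simp
qed

lemma sorted_sublist_znodes_positions:
  assumes "sorted_wrt zlt a" "set a \<subseteq> set (znodes t)"
  obtains ps where "length ps = length a" "sorted_wrt (<) ps" "\<forall>p\<in>set ps. p < length (leaves t)"
    "\<forall>j<length a. znodes t ! (ps ! j) = a ! j"
proof -
  have "\<forall>z\<in>set a. \<exists>p. p < length (leaves t) \<and> znodes t ! p = z"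
    using assms(2) length_znodes[of t] by (metis in_set_conv_nth subsetD)
  then obtain pos where pos: "\<And>z. z \<in> set a \<Longrightarrow> pos z < length (leaves t) \<and> znodes t ! pos z = z"
    by metis
  have "pos (a ! i) < pos (a ! j)" if "i < j" "j < length a" for i j
  proof (rule ccontr)
    have ai: "a ! i \<in> set a" and aj: "a ! j \<in> set a"
      using that by auto
    have "zlt (a ! i) (a ! j)"
      using assms(1) that by (simp add: sorted_wrt_iff_nth_less)
    assume "\<not> pos (a ! i) < pos (a ! j)"
    then consider "pos (a ! j) = pos (a ! i)" | "pos (a ! j) < pos (a ! i)"
      by linarith
    then show False
    proof cases
      case 1
      then have "a ! i = a ! j"
        using pos[OF ai] pos[OF aj] by metis
      then show False
        using \<open>zlt (a ! i) (a ! j)\<close> by (simp add: zlt_iff_zval)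
    next
      case 2
      then have "zlt (a ! j) (a ! i)"
        using sorted_wrt_nth_less[OF sorted_znodes[of t] 2] pos[OF ai] pos[OF aj] length_znodes[of t]
        by simp
      then show False
        using \<open>zlt (a ! i) (a ! j)\<close> by (simp add: zlt_iff_zval)
    qed
  qed
  then have "sorted_wrt (<) (map pos a)"
    by (simp add: sorted_wrt_iff_nth_less)
  then show ?thesis
    using that[of "map pos a"] pos by auto
qed

text \<open>The offset \<open>P\<close> keeps the number of positions after the last entry unchanged, so that
  only shifts to the right are needed, and these are nondecreasing because gaps at most \<open>G\<close> become
  gaps \<open>G + 1\<close>.\<close>

lemma spaced_tree:
  assumes "sorted_wrt zlt a" "set a \<subseteq> set (znodes t)" "a \<noteq> []" "length (leaves t) \<le> G"
  obtains t' P where "P \<le> G" "length (leaves t') = length a * (G + 1)"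
    "\<forall>j<length a. znodes t' ! (P + j * (G + 1)) = a ! j"
proof -
  obtain ps where ps: "length ps = length a" "sorted_wrt (<) ps" "\<forall>p\<in>set ps. p < length (leaves t)"
    "\<forall>j<length a. znodes t ! (ps ! j) = a ! j"
    using sorted_sublist_znodes_positions[OF assms(1,2)] by blast
  define m where "m = length a - 1"
  define K where "K = length (leaves t)"
  define P where "P = G + 1 + ps ! m - K"
  define \<delta> where "\<delta> j = P + j * (G + 1) - ps ! j" for j
  have m: "m < length ps"
    using assms(3) ps(1) by (simp add: m_def)
  have ps_K: "ps ! j < K" if "j < length ps" for j
    using ps(3) that by (simp add: K_def)
  have ps_le: "ps ! j \<le> ps ! m" if "j < length ps" for j
  proof (cases "j = m")
    case False
    then have "j < m"
      using that ps(1) by (simp add: m_def)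
    then show ?thesis
      using sorted_wrt_nth_less[OF ps(2), of j m] m by simp
  qed simp
  have "\<exists>t'. length (leaves t') = K + \<delta> (length ps - 1) \<and>
      (\<forall>j<length ps. znodes t' ! (ps ! j + \<delta> j) = znodes t ! (ps ! j))"
    unfolding K_def
  proof (rule expand_to_positions[OF _ ps(2,3)])
    show "ps \<noteq> []"
      using m by auto
    show "\<delta> i \<le> \<delta> j" if "i \<le> j" "j < length ps" for i j
    proof (cases "i = j")
      case False
      then have "i * (G + 1) + (G + 1) \<le> j * (G + 1)"
        using that mult_le_mono1[of "Suc i" j "G + 1"] by simp
      then show ?thesis
        using ps_K[of i] ps_K[of j] that assms(4) by (simp add: \<delta>_def K_def)
    qed simp
  qed
  then obtain t' where "length (leaves t') = K + \<delta> m"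
    "\<forall>j<length ps. znodes t' ! (ps ! j + \<delta> j) = znodes t ! (ps ! j)"
    using ps(1) by (auto simp: m_def)
  moreover have "ps ! j + \<delta> j = P + j * (G + 1)" if "j < length ps" for j
    using ps_le[OF that] ps_K[OF m] assms(4) unfolding \<delta>_def P_def K_def by simp
  moreover have "K + \<delta> m = length a * (G + 1)"
  proof -
    have "length a = Suc m"
      using assms(3) by (simp add: m_def)
    moreover have "K \<le> G"
      using assms(4) by (simp add: K_def)
    ultimately show ?thesis
      using ps_K[OF m] unfolding \<delta>_def P_def by simp
  qed
  moreover have "P \<le> G"
    using ps_K[OF m] assms(4) by (simp add: P_def K_def)
  ultimately show ?thesis
    using that[of P t'] ps(1,4) by simp
qed

lemma conc_eq_prefix:
  assumes "conc l w = conc l' w'" "length l \<le> length l'"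
  shows "l' = l @ drop (length l) l'"
proof -
  have "take (length l) l' = l"
  proof (rule nth_equalityI)
    fix n assume "n < length (take (length l) l')"
    then show "take (length l) l' ! n = l ! n"
      using fun_cong[OF assms(1), of n] assms(2) by (simp add: conc_def)
  qed (use assms(2) in simp)
  then show ?thesis
    by (metis append_take_drop_id)
qed

lemma conc_leaves_eq_imp_eq:
  assumes "i < length (leaves t)" "j < length (leaves t)" "conc (leaves t ! i) w = conc (leaves t ! j) w'"
  shows "i = j"
proof (cases "length (leaves t ! i) \<le> length (leaves t ! j)")
  case True
  then show ?thesis
    using conc_eq_prefix[OF assms(3)]
      nth_leaves_append_unique[OF assms(1,2), of "drop (length (leaves t ! i)) (leaves t ! j)" "[]"]
    by simp
next
  case False
  then show ?thesis
    using conc_eq_prefix[OF assms(3)[symmetric]]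
      nth_leaves_append_unique[OF assms(2,1), of "drop (length (leaves t ! j)) (leaves t ! i)" "[]"]
    by simp
qed

definition tree_pair_map :: "btree \<Rightarrow> btree \<Rightarrow> nat \<Rightarrow> (nat \<Rightarrow> bool) \<Rightarrow> (nat \<Rightarrow> bool)" where
  "tree_pair_map tL tR c \<omega> =
     (let k = length (leaves tL); i = (THE i. i < k \<and> (\<exists>w. \<omega> = conc (leaves tL ! i) w)) in
      conc (leaves tR ! ((i + c) mod k)) (\<lambda>n. \<omega> (n + length (leaves tL ! i))))"

lemma thompson_rep_tree_pair_map:
  assumes "length (leaves tR) = length (leaves tL)"
  shows "thompson_rep (tree_pair_map tL tR c) (words tL) (words tR) c"
  unfolding thompson_rep_words
proof (intro conjI allI impI)
  fix i w assume i: "i < length (leaves tL)"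
  have "(THE i'. i' < length (leaves tL) \<and> (\<exists>w'. conc (leaves tL ! i) w = conc (leaves tL ! i') w')) = i"
    using i conc_leaves_eq_imp_eq[OF i] by (intro the_equality) blast+
  moreover have "(\<lambda>n. conc (leaves tL ! i) w (n + length (leaves tL ! i))) = w"
    by (simp add: conc_def)
  ultimately show "tree_pair_map tL tR c (conc (leaves tL ! i) w) =
      conc (leaves tR ! ((i + c) mod length (leaves tL))) w"
    unfolding tree_pair_map_def Let_def by simp
qed (rule assms)

lemma tree_pair_map_in_ThompsonT:
  "length (leaves tR) = length (leaves tL) \<Longrightarrow> tree_pair_map tL tR c \<in> ThompsonT"
  unfolding ThompsonT_def using thompson_rep_tree_pair_map by blast

lemma iota_tree_pair_map_znode:
  assumes "length (leaves tR) = length (leaves tL)" "i < length (leaves tL)"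
  shows "iota (tree_pair_map tL tR c) (znodes tL ! i) = znodes tR ! ((i + c) mod length (leaves tL))"
  using iota_eq_iota_data[OF thompson_rep_tree_pair_map[OF assms(1)]] iota_data_znode[OF assms(2)]
  by simp

fun zlen :: "zel \<Rightarrow> nat" where
  "zlen (W x) = length x"
| "zlen Zeta = 0"

lemma set_subset_znodes_complete_tree:
  "set zs \<subseteq> set (znodes (complete_tree (Suc (sum_list (map zlen zs)))))"
proof
  fix z assume "z \<in> set zs"
  then have "zlen z \<le> sum_list (map zlen zs)"
    by (intro member_le_sum_list) auto
  then show "z \<in> set (znodes (complete_tree (Suc (sum_list (map zlen zs)))))"
    by (cases z) (simp_all del: complete_tree.simps add: znodes_def set_nodes_complete_tree)
qed

lemma mult_add_mod_mult:
  fixes e r g n :: nat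
  assumes "r < g"
  shows "(e * g + r) mod (n * g) = (e mod n) * g + r"
proof -
  have "(e * g + r) div g = e" "(e * g + r) mod g = r"
    using assms by simp_all
  then show ?thesis
    using mod_mult2_eq[of "e * g + r" g n] by (simp add: mult.commute)
qed

lemma ex_ThompsonT_map_sorted_rotate:
  assumes "sorted_wrt zlt a" "sorted_wrt zlt b" "length a = n" "length b = n" "n > 0"
  shows "\<exists>t\<in>ThompsonT. map (iota t) a = rotate d b"
proof -
  define F where "F = complete_tree (Suc (sum_list (map zlen (a @ b))))"
  define G where "G = length (leaves F)"
  define g where "g = G + 1"
  have "set a \<subseteq> set (znodes F)" "set b \<subseteq> set (znodes F)"
    using set_subset_znodes_complete_tree[of "a @ b"] unfolding F_def by auto
  moreover have "a \<noteq> []" "b \<noteq> []" "length (leaves F) \<le> G"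
    using assms by (auto simp: G_def)
  ultimately obtain tL PL tR PR where "PL \<le> G" "length (leaves tL) = n * g"
    "\<forall>j<n. znodes tL ! (PL + j * g) = a ! j" and "PR \<le> G" "length (leaves tR) = n * g"
    "\<forall>j<n. znodes tR ! (PR + j * g) = b ! j"
    using spaced_tree[OF assms(1)] spaced_tree[OF assms(2)] assms(3,4) unfolding g_def by metis
  define c where "c = (d + n) * g + PR - PL"
  define v where "v = tree_pair_map tL tR c"
  have "iota v (a ! j) = b ! ((d + j) mod n)" if "j < n" for j
  proof -
    have "PL + j * g < n * g"
      using that \<open>PL \<le> G\<close> mult_le_mono1[of "Suc j" n g] by (simp add: g_def)
    then have "iota v (a ! j) = znodes tR ! ((PL + j * g + c) mod (n * g))"
      using iota_tree_pair_map_znode[of tR tL "PL + j * g" c] \<open>length (leaves tL) = n * g\<close>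
        \<open>length (leaves tR) = n * g\<close> \<open>\<forall>j<n. znodes tL ! (PL + j * g) = a ! j\<close> that
      by (simp add: v_def)
    also have "PL + j * g + c = (d + j + n) * g + PR"
      using \<open>PL \<le> G\<close> assms(5) mult_le_mono1[of 1 "d + n" g] by (simp add: c_def g_def algebra_simps)
    also have "((d + j + n) * g + PR) mod (n * g) = ((d + j) mod n) * g + PR"
      using mult_add_mod_mult[of PR g "d + j + n" n] \<open>PR \<le> G\<close> by (simp add: g_def)
    finally show ?thesis
      using \<open>\<forall>j<n. znodes tR ! (PR + j * g) = b ! j\<close> assms(5) by (simp add: add.commute)
  qed
  then have "map (iota v) a = rotate d b"
    using assms(3-5) by (intro nth_equalityI) (simp_all add: nth_rotate)
  moreover have "v \<in> ThompsonT"
    using tree_pair_map_in_ThompsonT \<open>length (leaves tL) = n * g\<close> \<open>length (leaves tR) = n * g\<close>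
    by (simp add: v_def)
  ultimately show ?thesis
    by blast
qed

lemma iota_transitive_on_Lambda:
  assumes "xs \<in> Lambda n" "ys \<in> Lambda n"
  shows "\<exists>t\<in>ThompsonT. map (iota t) xs = ys"
proof (cases "n = 0")
  case True
  then have "xs = []" "ys = []"
    using assms unfolding Lambda_def by auto
  moreover have "tree_pair_map Leaf Leaf 0 \<in> ThompsonT"
    by (simp add: tree_pair_map_in_ThompsonT)
  ultimately show ?thesis
    by auto
next
  case False
  obtain r s where "length xs = n" "sorted_wrt zlt (rotate r xs)" "length ys = n" "sorted_wrt zlt (rotate s ys)"
    using assms unfolding Lambda_def by blast
  then obtain t where "t \<in> ThompsonT" and t: "map (iota t) (rotate r xs) = rotate (r + n * s - s) (rotate s ys)"
    using ex_ThompsonT_map_sorted_rotate[of "rotate r xs" "rotate s ys" n "r + n * s - s"] False by auto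
  have "s \<le> n * s"
    using False by simp
  then have "r + n * s - s + s = r + n * s"
    by linarith
  then have "rotate (r + n * s - s) (rotate s ys) = rotate (r + n * s) ys"
    by (simp only: rotate_rotate)
  also have "\<dots> = rotate ((r + n * s) mod length ys) ys"
    by (rule rotate_conv_mod)
  also have "\<dots> = rotate r ys"
    using \<open>length ys = n\<close> rotate_conv_mod[of r ys] by simp
  finally have "rotate r (map (iota t) xs) = rotate r ys"
    using t by (simp add: rotate_map)
  then have "map (iota t) xs = ys"
    unfolding rotate_def by (rule injD[OF inj_fn[OF inj_rotate1]])
  then show ?thesis
    using \<open>t \<in> ThompsonT\<close> by blast
qed

theorem lemma3p8:
  fixes n :: nat
  shows "(\<forall>t\<in>ThompsonT. \<forall>xs\<in>Lambda n. map (iota t) xs \<in> Lambda n)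
       \<and> (\<forall>xs\<in>Lambda n. \<forall>ys\<in>Lambda n. \<exists>t\<in>ThompsonT. map (iota t) xs = ys)"
  using iota_preserves_Lambda iota_transitive_on_Lambda by blast

end
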